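(* Let $\mathbb{H}$ be a simple hypergraph of order $n$ with strong independence number $\bar\alpha(\mathbb{H})$. Then for all non-negative integers $h>k$, $$\lambda_{h,k}(\mathbb{H})\le nh+\bar\alpha(\mathbb{H})(k-h)-k.$$
   Context: A set $W\subseteq V$ in a hypergraph $\mathbb{H}=(V,E)$ is strong stable if $|W\cap e|\le 1$ for every $e\in E$; $\bar\alpha(\mathbb{H})$ is the maximum cardinality of a strong stable set. For non-negative integers $h>k$, an $L(h,k)$-colouring of $\mathbb{H}$ is a map $f:V\to\mathbb{Z}_{\ge 0}$ such that $|f(u)-f(v)|\ge h$ whenever $u\ne v$ lie in a common edge, and $|f(u)-f(v)|\ge k$ whenever there are edges $e_1\ni v$, $e_2\ni u$ with $(e_1\cap e_2)\setminus\{u,v\}\ne\emptyset$. The span is $\max f-\min f$; $\lambda_{h,k}(\mathbb{H})$ is the minimum span of an $L(h,k)$-colouring. A hypergraph is simple if no edge contains another and every edge has at least two vertices. *)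

theory Defs
  imports Main
begin

definition hypergraph :: "'a set \<Rightarrow> 'a set set \<Rightarrow> bool" where
  "hypergraph V E \<longleftrightarrow> finite V \<and> (\<forall>e\<in>E. e \<subseteq> V)"

definition simple_hypergraph :: "'a set \<Rightarrow> 'a set set \<Rightarrow> bool" where
  "simple_hypergraph V E \<longleftrightarrow> hypergraph V E \<and>
     (\<forall>e\<in>E. card e \<ge> 2) \<and>
     (\<forall>e1\<in>E. \<forall>e2\<in>E. e1 \<subseteq> e2 \<longrightarrow> e1 = e2)"

definition strong_stable :: "'a set \<Rightarrow> 'a set set \<Rightarrow> 'a set \<Rightarrow> bool" where
  "strong_stable V E W \<longleftrightarrow> W \<subseteq> V \<and> (\<forall>e\<in>E. card (W \<inter> e) \<le> 1)"

definition strong_stability_number :: "'a set \<Rightarrow> 'a set set \<Rightarrow> nat" where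
  "strong_stability_number V E = Max {card W | W. strong_stable V E W}"

definition Lhk_colouring :: "nat \<Rightarrow> nat \<Rightarrow> 'a set \<Rightarrow> 'a set set \<Rightarrow> ('a \<Rightarrow> nat) \<Rightarrow> bool" where
  "Lhk_colouring h k V E f \<longleftrightarrow>
     (\<forall>u\<in>V. \<forall>v\<in>V. u \<noteq> v \<longrightarrow>
        ((\<exists>e\<in>E. u \<in> e \<and> v \<in> e) \<longrightarrow> \<bar>int (f u) - int (f v)\<bar> \<ge> int h) \<and>
        ((\<exists>e1\<in>E. \<exists>e2\<in>E. v \<in> e1 \<and> u \<in> e2 \<and> (e1 \<inter> e2) - {u, v} \<noteq> {})
            \<longrightarrow> \<bar>int (f u) - int (f v)\<bar> \<ge> int k))"

definition span :: "'a set \<Rightarrow> ('a \<Rightarrow> nat) \<Rightarrow> nat" where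
  "span V f = Max (f ` V) - Min (f ` V)"

definition lambda_hk :: "nat \<Rightarrow> nat \<Rightarrow> 'a set \<Rightarrow> 'a set set \<Rightarrow> nat" where
  "lambda_hk h k V E = Inf {span V f | f. Lhk_colouring h k V E f}"

end

theory Submission
  imports Defs
begin

text \<open>Give a maximum strong stable set \<open>W\<close>, \<open>|W| = a\<close>, the colours \<open>0, k, \<dots>, (a - 1) k\<close>
and the remaining \<open>n - a\<close> vertices the colours \<open>(a - 1) k + h, (a - 1) k + 2 h, \<dots>\<close>.
Two vertices of a common edge are never both in \<open>W\<close>, so every such pair is \<open>h\<close> apart,
and all pairs are at least \<open>k \<le> h\<close> apart. The largest colour is \<open>(a - 1) k + (n - a) h\<close>.\<close>

lemma finite_strong_stable_cards:
  assumes "finite V"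
  shows "finite {card W | W. strong_stable V E W}"
proof -
  have "{card W | W. strong_stable V E W} \<subseteq> card ` Pow V"
    by (auto simp: strong_stable_def)
  thus ?thesis
    using assms by (meson finite_Pow_iff finite_imageI finite_subset)
qed

lemma strong_stability_number_attained:
  assumes "finite V"
  obtains W where "strong_stable V E W" and "card W = strong_stability_number V E"
proof -
  have "{card W | W. strong_stable V E W} \<noteq> {}"
    using strong_stable_def[of V E "{}"] by auto
  thus thesis
    using Max_in[OF finite_strong_stable_cards[OF assms]] that
    unfolding strong_stability_number_def by fastforce
qed

lemma strong_stability_number_pos:
  assumes "finite V" and "V \<noteq> {}"
  shows "1 \<le> strong_stability_number V E"
proof -
  obtain v where "v \<in> V"
    using assms(2) by blast
  hence "strong_stable V E {v}"
    by (auto simp: strong_stable_def intro: order_trans[OF card_mono[of "{v}"]])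
  hence "card {v} \<in> {card W | W. strong_stable V E W}"
    by blast
  thus ?thesis
    unfolding strong_stability_number_def
    using Max_ge[OF finite_strong_stable_cards[OF assms(1)]] by fastforce
qed

lemma strong_stable_edge_not_both:
  assumes "hypergraph V E" and "strong_stable V E W"
    and "e \<in> E" and "u \<in> e" and "v \<in> e" and "u \<noteq> v"
  shows "u \<notin> W \<or> v \<notin> W"
proof (rule ccontr)
  assume "\<not> (u \<notin> W \<or> v \<notin> W)"
  hence "{u, v} \<subseteq> W \<inter> e"
    using assms by auto
  moreover have "finite e"
    using assms(1,3) by (auto simp: hypergraph_def intro: finite_subset)
  ultimately have "2 \<le> card (W \<inter> e)"
    using card_mono[of "W \<inter> e" "{u, v}"] \<open>u \<noteq> v\<close> by simp
  thus False
    using assms(2,3) by (auto simp: strong_stable_def)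
qed

lemma Lhk_colouring_of_strong_stable:
  assumes "hypergraph V E" and "strong_stable V E W"
    and k_gap: "\<And>u v. u \<in> V \<Longrightarrow> v \<in> V \<Longrightarrow> u \<noteq> v \<Longrightarrow> int k \<le> \<bar>int (f u) - int (f v)\<bar>"
    and h_gap: "\<And>u v. u \<in> V \<Longrightarrow> v \<in> V \<Longrightarrow> u \<noteq> v \<Longrightarrow> u \<notin> W \<or> v \<notin> W \<Longrightarrow>
                 int h \<le> \<bar>int (f u) - int (f v)\<bar>"
  shows "Lhk_colouring h k V E f"
  unfolding Lhk_colouring_def
  using k_gap h_gap strong_stable_edge_not_both[OF assms(1,2)] by blast

lemma lambda_hk_le_span:
  assumes "Lhk_colouring h k V E f"
  shows "lambda_hk h k V E \<le> span V f"
  unfolding lambda_hk_def using assms by (intro cInf_lower) auto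

lemma span_le_bound:
  assumes "finite V" and "V \<noteq> {}" and "\<And>v. v \<in> V \<Longrightarrow> f v \<le> b"
  shows "span V f \<le> b"
proof -
  have "Max (f ` V) \<le> b"
    using assms by (subst Max_le_iff) auto
  thus ?thesis
    unfolding span_def by linarith
qed

lemma scaled_labels_gap:
  assumes "(i :: nat) \<noteq> j"
  shows "int d \<le> \<bar>int (c + d * i) - int (c + d * j)\<bar>"
proof -
  have "int d * 1 \<le> int d * \<bar>int i - int j\<bar>"
    using assms by (intro mult_left_mono) auto
  also have "\<dots> = \<bar>int (c + d * i) - int (c + d * j)\<bar>"
    by (simp add: abs_mult flip: right_diff_distrib)
  finally show ?thesis by simp
qed

lemma staircase_colouring:
  assumes "finite V" and "W \<subseteq> V" and "k \<le> h"
  obtains f :: "'a \<Rightarrow> nat" where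
    "\<And>u v. u \<in> V \<Longrightarrow> v \<in> V \<Longrightarrow> u \<noteq> v \<Longrightarrow> int k \<le> \<bar>int (f u) - int (f v)\<bar>"
    and "\<And>u v. u \<in> V \<Longrightarrow> v \<in> V \<Longrightarrow> u \<noteq> v \<Longrightarrow> u \<notin> W \<or> v \<notin> W \<Longrightarrow>
           int h \<le> \<bar>int (f u) - int (f v)\<bar>"
    and "\<And>v. v \<in> V \<Longrightarrow> f v \<le> (card W - 1) * k + card (V - W) * h"
proof -
  let ?c = "(card W - 1) * k"
  have "finite W" and "finite (V - W)"
    using assms(1,2) finite_subset by auto
  then obtain i j where
    i: "bij_betw i W {0..<card W}" and j: "bij_betw j (V - W) {1..card (V - W)}"
    using ex_bij_betw_finite_nat finite_same_card_bij[of "V - W" "{1..card (V - W)}"]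
    by fastforce
  define f where "f v = (if v \<in> W then 0 + k * i v else ?c + h * j v)" for v
  have low: "f v \<le> ?c" if "v \<in> W" for v
  proof -
    have "i v < card W"
      using i that by (auto simp: bij_betw_def)
    hence "i v \<le> card W - 1"
      by linarith
    thus ?thesis
      using that by (simp add: f_def mult.commute)
  qed
  have high: "?c + h \<le> f v \<and> f v \<le> ?c + card (V - W) * h" if "v \<in> V - W" for v
  proof -
    have "1 \<le> j v \<and> j v \<le> card (V - W)"
      using j that by (auto simp: bij_betw_def)
    thus ?thesis
      using that by (simp add: f_def mult.commute)
  qed
  have cross: "int h \<le> \<bar>int (f u) - int (f v)\<bar>" if "u \<in> W" "v \<in> V - W" for u v
    using low[OF that(1)] high[OF that(2)] by linarith
  have gaps: "int k \<le> \<bar>int (f u) - int (f v)\<bar> \<and>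
      (u \<notin> W \<or> v \<notin> W \<longrightarrow> int h \<le> \<bar>int (f u) - int (f v)\<bar>)"
    if "u \<in> V" "v \<in> V" "u \<noteq> v" for u v
  proof -
    consider "u \<in> W" "v \<in> W" | "u \<in> W" "v \<notin> W" | "u \<notin> W" "v \<in> W" | "u \<notin> W" "v \<notin> W"
      by blast
    thus ?thesis
    proof cases
      case 1
      hence "i u \<noteq> i v"
        using i that by (auto simp: bij_betw_def inj_on_def)
      thus ?thesis
        using 1 scaled_labels_gap[of "i u" "i v" k 0] by (simp add: f_def)
    next
      case 2
      thus ?thesis using cross[of u v] that assms(3) by auto
    next
      case 3
      thus ?thesis using cross[of v u] that assms(3) by auto
    next
      case 4
      hence "j u \<noteq> j v"
        using j that by (auto simp: bij_betw_def inj_on_def)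
      thus ?thesis
        using 4 scaled_labels_gap[of "j u" "j v" h ?c] assms(3) by (simp add: f_def)
    qed
  qed
  show thesis
  proof (rule that)
    show "f v \<le> ?c + card (V - W) * h" if "v \<in> V" for v
      using low high that by (cases "v \<in> W") (auto intro: order_trans[OF _ le_add1])
  qed (use gaps in blast)+
qed

theorem theorem3p2:
  fixes V :: "'a set" and E :: "'a set set" and h k :: nat
  assumes "simple_hypergraph V E"
    and "V \<noteq> {}"
    and "k < h"
  shows "int (lambda_hk h k V E) \<le>
           int (card V) * int h + int (strong_stability_number V E) * (int k - int h) - int k"
proof -
  have H: "hypergraph V E" and "finite V"
    using assms(1) by (auto simp: simple_hypergraph_def hypergraph_def)
  obtain W where W: "strong_stable V E W" and a: "card W = strong_stability_number V E"
    using strong_stability_number_attained[OF \<open>finite V\<close>] by blast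
  have "W \<subseteq> V"
    using W by (simp add: strong_stable_def)
  obtain f where gap_k: "\<And>u v. u \<in> V \<Longrightarrow> v \<in> V \<Longrightarrow> u \<noteq> v \<Longrightarrow> int k \<le> \<bar>int (f u) - int (f v)\<bar>"
    and gap_h: "\<And>u v. u \<in> V \<Longrightarrow> v \<in> V \<Longrightarrow> u \<noteq> v \<Longrightarrow> u \<notin> W \<or> v \<notin> W \<Longrightarrow>
                  int h \<le> \<bar>int (f u) - int (f v)\<bar>"
    and bound: "\<And>v. v \<in> V \<Longrightarrow> f v \<le> (card W - 1) * k + card (V - W) * h"
    using staircase_colouring[OF \<open>finite V\<close> \<open>W \<subseteq> V\<close> less_imp_le[OF assms(3)]] by blast
  have "lambda_hk h k V E \<le> span V f"
    by (intro lambda_hk_le_span Lhk_colouring_of_strong_stable[OF H W gap_k gap_h])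
  also have "\<dots> \<le> (card W - 1) * k + (card V - card W) * h"
    using span_le_bound[OF \<open>finite V\<close> assms(2) bound] \<open>W \<subseteq> V\<close> \<open>finite V\<close>
    by (simp add: card_Diff_subset finite_subset)
  finally have "lambda_hk h k V E \<le> (card W - 1) * k + (card V - card W) * h" .
  moreover have "1 \<le> card W" and "card W \<le> card V"
    using strong_stability_number_pos[OF \<open>finite V\<close> assms(2)] a card_mono[OF \<open>finite V\<close> \<open>W \<subseteq> V\<close>]
    by simp_all
  hence "int ((card W - 1) * k + (card V - card W) * h)
          = (int (card W) - 1) * int k + (int (card V) - int (card W)) * int h"
    by (simp add: of_nat_diff)
  also have "\<dots> = int (card V) * int h + int (card W) * (int k - int h) - int k"
    by (simp add: algebra_simps)
  ultimately show ?thesis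
    unfolding a[symmetric] by linarith
qed

end
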